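(* Let $X\sim N(\mu,\sigma^2)$ and $Y\sim N(\theta,\sigma^2)$ be independent, $\sigma>0$, and $\tau\ge1$. Set $\eta=E_{(0,0)}\big[(X^2-\sigma^2)(Y^2-\sigma^2)\mathbb 1(X^2\vee Y^2>\sigma^2\tau)\big]$, the expectation taken under $\mu=\theta=0$. Then $\eta=-4\sigma^4\tau\,\phi^2(\tau^{1/2})$, and $$\Big|E\big[(X^2-\sigma^2)(Y^2-\sigma^2)\mathbb 1(X^2\vee Y^2>\sigma^2\tau)\big]-\eta-\mu^2\theta^2\Big|\le\min\{\mu^2,3\sigma^2\tau\}\min\{\theta^2,3\sigma^2\tau\}+2\sigma^2\tau^{1/2}\phi(\tau^{1/2})\min\{\mu^2,3\sigma^2\tau\}+2\sigma^2\tau^{1/2}\phi(\tau^{1/2})\min\{\theta^2,3\sigma^2\tau\}.$$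
   Context: $\phi$ denotes the standard normal density; $X^2\vee Y^2=\max\{X^2,Y^2\}$. *)

theory Defs
  imports "HOL-Probability.Probability"
begin

definition prod_trunc :: "real \<Rightarrow> real \<Rightarrow> real \<Rightarrow> real \<Rightarrow> real" where
  "prod_trunc \<sigma> \<tau> x y =
     (x\<^sup>2 - \<sigma>\<^sup>2) * (y\<^sup>2 - \<sigma>\<^sup>2) * (if max (x\<^sup>2) (y\<^sup>2) > \<sigma>\<^sup>2 * \<tau> then 1 else 0)"

definition eta :: "real \<Rightarrow> real \<Rightarrow> real" where
  "eta \<sigma> \<tau> = (\<integral>z. prod_trunc \<sigma> \<tau> (fst z) (snd z) *
       normal_density 0 \<sigma> (fst z) * normal_density 0 \<sigma> (snd z) \<partial>(lborel \<Otimes>\<^sub>M lborel))"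

end

theory Submission
  imports Defs
begin

text \<open>
  With \<open>q x = x\<^sup>2 - \<sigma>\<^sup>2\<close> and \<open>H = q \<cdot> 1(x\<^sup>2 \<le> \<sigma>\<^sup>2\<tau>)\<close> the integrand is \<open>q(X) q(Y) - H(X) H(Y)\<close>.
  Independence and \<open>E q(X) = \<mu>\<^sup>2\<close> give \<open>E = \<mu>\<^sup>2\<theta>\<^sup>2 - E\<^sub>\<mu>H \<cdot> E\<^sub>\<theta>H\<close> and \<open>\<eta> = -(E\<^sub>0H)\<^sup>2\<close>, so
  the theorem reduces to the one-dimensional estimate \<open>\<bar>E\<^sub>\<mu>H - E\<^sub>0H\<bar> \<le> min \<mu>\<^sup>2 (3\<sigma>\<^sup>2\<tau>)\<close>.
  Since \<open>(x\<^sup>2 - \<sigma>\<^sup>2 - \<mu>\<^sup>2) n(x)\<close> has the antiderivative \<open>-\<sigma>\<^sup>2 (x + \<mu>) n(x)\<close> for the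
  \<open>N(\<mu>, \<sigma>\<^sup>2)\<close> density \<open>n\<close>, one gets \<open>E\<^sub>\<mu>H = \<mu>\<^sup>2 P - \<sigma>\<^sup>2 F(\<surd>\<tau>, \<mu>/\<sigma>)\<close> with
  \<open>P = P(\<bar>X\<bar> \<le> \<sigma>\<surd>\<tau>)\<close> and \<open>F(a, m) = (a + m) \<phi>(a - m) + (a - m) \<phi>(a + m)\<close>; in particular
  \<open>E\<^sub>0H = -2\<sigma>\<^sup>2\<surd>\<tau> \<phi>(\<surd>\<tau>)\<close>. The estimate then follows because \<open>F(a, \<cdot>)\<close> is even, increasing
  for \<open>m\<^sup>2 \<le> 1 + a\<^sup>2\<close>, grows by at most \<open>11/10 m\<^sup>2\<close> on \<open>[0, 1]\<close>, and \<open>P \<ge> 1/10\<close> when \<open>\<bar>\<mu>\<bar> \<le> \<sigma>\<close>;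
  far from \<open>0\<close> the crude bounds \<open>-\<sigma>\<^sup>2 \<le> E\<^sub>\<mu>H \<le> \<sigma>\<^sup>2(\<tau> - 1)\<close> suffice.
\<close>

lemma has_real_derivative_std_normal_density:
  "(std_normal_density has_real_derivative - x * std_normal_density x) (at x)"
  unfolding std_normal_density_def
  by (auto intro!: derivative_eq_intros simp: field_simps)

lemma std_normal_density_antimono_abs:
  "\<bar>x\<bar> \<le> \<bar>y\<bar> \<Longrightarrow> std_normal_density y \<le> std_normal_density x"
  unfolding std_normal_density_def by (simp add: abs_le_square_iff divide_right_mono)

lemma sinh_le_mult_sinh:
  fixes s a :: real
  assumes "0 \<le> s" "s \<le> 1" "0 \<le> a"
  shows "sinh (s * a) \<le> s * sinh a"
proof -
  have "convex_on {0..} (sinh :: real \<Rightarrow> real)"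
  proof (rule convex_on_realI[where f' = cosh])
    show "(sinh has_real_derivative cosh x) (at x)" for x :: real
      by (auto intro!: derivative_eq_intros)
    show "cosh x \<le> cosh y" if "x \<in> {0..}" "y \<in> {0..}" "x \<le> y" for x y :: real
      using that by (simp add: cosh_real_nonneg_le_iff)
  qed simp
  from convex_onD[OF this, of s 0 a] assms show ?thesis by simp
qed

lemma std_normal_density_diff_le:
  fixes s a :: real
  assumes "0 \<le> s" "s \<le> 1" "0 \<le> a"
  shows "std_normal_density (a - s) - std_normal_density (a + s) \<le> s * exp (a - a\<^sup>2 / 2) / sqrt (2 * pi)"
proof -
  have "std_normal_density (a - s) - std_normal_density (a + s)
      = 2 * exp (- a\<^sup>2 / 2) * exp (- s\<^sup>2 / 2) * sinh (s * a) / sqrt (2 * pi)"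
    unfolding std_normal_density_def sinh_def
    by (simp add: field_simps power2_eq_square flip: exp_add exp_diff)
  also have "\<dots> \<le> 2 * exp (- a\<^sup>2 / 2) * 1 * (s * (exp a / 2)) / sqrt (2 * pi)"
  proof (intro divide_right_mono mult_mono order.refl)
    show "sinh (s * a) \<le> s * (exp a / 2)"
    proof -
      have "sinh a \<le> exp a / 2" by (simp add: sinh_def)
      then show ?thesis using sinh_le_mult_sinh[OF assms] assms(1) by (meson mult_left_mono order.trans)
    qed
  qed (use assms in auto)
  also have "\<dots> = s * exp (a - a\<^sup>2 / 2) / sqrt (2 * pi)"
    by (simp flip: exp_add)
  finally show ?thesis .
qed

lemma sqrt_2pi_bounds: "5 / 2 \<le> sqrt (2 * pi)" "sqrt (2 * pi) \<le> 13 / 5"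
proof -
  have "(5 / 2)\<^sup>2 \<le> 2 * pi" using pi_approx by (simp add: power2_eq_square)
  then show "5 / 2 \<le> sqrt (2 * pi)" by (rule real_le_rsqrt)
  have "2 * pi \<le> (13 / 5)\<^sup>2" using pi_approx by (simp add: power2_eq_square)
  then have "sqrt (2 * pi) \<le> sqrt ((13 / 5)\<^sup>2)" by (rule real_sqrt_le_mono)
  then show "sqrt (2 * pi) \<le> 13 / 5" by simp
qed

lemma exp_half_le: "exp (1 / 2 :: real) \<le> 33 / 20"
proof (rule power2_le_imp_le)
  have "exp (1 :: real) \<le> (33 / 20)\<^sup>2" using e_approx_32 unfolding abs_le_iff by (simp add: power2_eq_square)
  then show "(exp (1 / 2 :: real))\<^sup>2 \<le> (33 / 20)\<^sup>2" by (simp add: power2_eq_square flip: exp_add)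
qed simp

lemma exp_two_le: "exp (2 :: real) \<le> 37 / 5"
proof -
  have "exp (1 :: real) \<le> 68 / 25" using e_approx_32 unfolding abs_le_iff by simp
  then have "exp (1 :: real) * exp 1 \<le> 68 / 25 * (68 / 25)" by (intro mult_mono) auto
  then show ?thesis by (simp flip: exp_add)
qed

lemma one_plus_square_mult_exp_le:
  fixes a :: real
  assumes "1 \<le> a"
  shows "(1 + a\<^sup>2) * exp (a - a\<^sup>2 / 2) \<le> 11 / 5 * sqrt (2 * pi)"
proof -
  define u where "u = a - 1"
  \<comment> \<open>\<open>a - a\<^sup>2/2 = 1/2 - u\<^sup>2/2\<close>; bound \<open>exp (u\<^sup>2/2)\<close> below by its quadratic Taylor polynomial.\<close>
  have exp_shift: "exp (a - a\<^sup>2 / 2) * exp (u\<^sup>2 / 2) = exp (1 / 2)"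
    by (simp add: u_def power2_eq_square field_simps flip: exp_add)
  have taylor: "1 + u\<^sup>2 / 2 + (u\<^sup>2 / 2)\<^sup>2 / 2 \<le> exp (u\<^sup>2 / 2)"
    by (rule exp_lower_Taylor_quadratic) simp
  have poly: "(1 + a\<^sup>2) * (33 / 20) \<le> 11 / 2 * (1 + u\<^sup>2 / 2 + (u\<^sup>2 / 2)\<^sup>2 / 2)"
  proof -
    have "11 / 2 * (1 + u\<^sup>2 / 2 + (u\<^sup>2 / 2)\<^sup>2 / 2) - (1 + a\<^sup>2) * (33 / 20)
        = 11 / 16 * (u\<^sup>2 - 1)\<^sup>2 + 99 / 40 * (u - 2 / 3)\<^sup>2 + 33 / 80"
      by (simp add: u_def power2_eq_square field_simps)
    moreover have "0 \<le> 11 / 16 * (u\<^sup>2 - 1)\<^sup>2 + 99 / 40 * (u - 2 / 3)\<^sup>2 + 33 / 80" by simp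
    ultimately show ?thesis by linarith
  qed
  have "(1 + a\<^sup>2) * exp (a - a\<^sup>2 / 2) * exp (u\<^sup>2 / 2) = (1 + a\<^sup>2) * exp (1 / 2)"
    using exp_shift by (simp add: mult.assoc)
  also have "\<dots> \<le> (1 + a\<^sup>2) * (33 / 20)" using exp_half_le by (intro mult_left_mono) auto
  also have "\<dots> \<le> 11 / 2 * exp (u\<^sup>2 / 2)" using poly mult_left_mono[OF taylor, of "11 / 2"] by linarith
  also have "\<dots> \<le> 11 / 5 * sqrt (2 * pi) * exp (u\<^sup>2 / 2)" using sqrt_2pi_bounds by (intro mult_right_mono) auto
  finally show ?thesis by simp
qed

text \<open>\<open>\<sigma>\<^sup>2 \<cdot> edge_term (\<surd>\<tau>) (\<mu>/\<sigma>)\<close> is the boundary term of the antiderivative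
  \<open>-\<sigma>\<^sup>2 (x + \<mu>) n(x)\<close> at \<open>x = \<plusminus>\<sigma>\<surd>\<tau>\<close>, see \<open>trunc_sq_dev_moment_eq\<close>.\<close>

definition edge_term :: "real \<Rightarrow> real \<Rightarrow> real" where
  "edge_term a s = (a + s) * std_normal_density (a - s) + (a - s) * std_normal_density (a + s)"

lemma edge_term_minus: "edge_term a (- s) = edge_term a s"
  unfolding edge_term_def by (simp add: algebra_simps)

lemma edge_term_zero: "edge_term a 0 = 2 * a * std_normal_density a"
  by (simp add: edge_term_def)

lemma has_real_derivative_edge_term:
  "(edge_term a has_real_derivative
     (1 + a\<^sup>2 - s\<^sup>2) * (std_normal_density (a - s) - std_normal_density (a + s))) (at s)"
proof -
  note chain = DERIV_chain2[OF has_real_derivative_std_normal_density]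
  have "edge_term a = (\<lambda>s. (a + s) * std_normal_density (a - s) + (a - s) * std_normal_density (a + s))"
    by (simp add: edge_term_def fun_eq_iff)
  then show ?thesis
    by (auto intro!: derivative_eq_intros chain simp: algebra_simps power2_eq_square)
qed

lemma edge_term_zero_bounds:
  assumes "0 \<le> a"
  shows "0 \<le> edge_term a 0" "edge_term a 0 \<le> 1"
proof -
  show "0 \<le> edge_term a 0" using assms by (simp add: edge_term_zero)
  have "a \<le> 1 + a\<^sup>2 / 2"
    using zero_le_power2[of "a - 1"] by (simp add: power2_eq_square algebra_simps)
  also have "\<dots> \<le> exp (a\<^sup>2 / 2)" by (rule exp_ge_add_one_self)
  finally have "a * exp (- a\<^sup>2 / 2) \<le> 1" by (simp add: exp_minus field_simps)
  then have "edge_term a 0 \<le> 2 / sqrt (2 * pi)"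
    by (simp add: edge_term_zero std_normal_density_def divide_right_mono)
  also have "\<dots> \<le> 1" using sqrt_2pi_bounds by simp
  finally show "edge_term a 0 \<le> 1" .
qed

lemma edge_term_zero_le:
  assumes "0 \<le> a" "0 \<le> m" "m\<^sup>2 \<le> 1 + a\<^sup>2"
  shows "edge_term a 0 \<le> edge_term a m"
proof (rule DERIV_nonneg_imp_increasing_open[OF assms(2)])
  fix x assume x: "0 < x" "x < m"
  then have "x\<^sup>2 \<le> m\<^sup>2" by (intro power_mono) auto
  moreover have "std_normal_density (a + x) \<le> std_normal_density (a - x)"
    using x assms by (intro std_normal_density_antimono_abs) auto
  ultimately have "0 \<le> (1 + a\<^sup>2 - x\<^sup>2) * (std_normal_density (a - x) - std_normal_density (a + x))"
    using assms by (intro mult_nonneg_nonneg) auto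
  then show "\<exists>y. DERIV (edge_term a) x :> y \<and> 0 \<le> y" using has_real_derivative_edge_term by blast
next
  show "continuous_on {0..m} (edge_term a)"
    using has_real_derivative_edge_term by (meson DERIV_isCont continuous_at_imp_continuous_on)
qed

lemma edge_term_le_zero_plus:
  assumes "1 \<le> a" "0 \<le> m" "m \<le> 1"
  shows "edge_term a m \<le> edge_term a 0 + 11 / 10 * m\<^sup>2"
proof -
  let ?G = "\<lambda>s. 11 / 10 * s\<^sup>2 - edge_term a s"
  have "?G 0 \<le> ?G m"
  proof (rule DERIV_nonneg_imp_increasing_open[OF assms(2)])
    fix x assume x: "0 < x" "x < m"
    let ?D = "std_normal_density (a - x) - std_normal_density (a + x)"
    have "0 \<le> ?D" using x assms by (simp add: std_normal_density_antimono_abs)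
    then have "(1 + a\<^sup>2 - x\<^sup>2) * ?D \<le> (1 + a\<^sup>2) * ?D"
      by (intro mult_right_mono) auto
    also have "\<dots> \<le> (1 + a\<^sup>2) * (x * exp (a - a\<^sup>2 / 2) / sqrt (2 * pi))"
      using std_normal_density_diff_le[of x a] x assms by (intro mult_left_mono) auto
    also have "\<dots> = x * ((1 + a\<^sup>2) * exp (a - a\<^sup>2 / 2)) / sqrt (2 * pi)" by simp
    also have "\<dots> \<le> x * (11 / 5 * sqrt (2 * pi)) / sqrt (2 * pi)"
      using one_plus_square_mult_exp_le[OF assms(1)] x by (intro divide_right_mono mult_left_mono) auto
    also have "\<dots> = 11 / 10 * (2 * x)" by simp
    finally have "0 \<le> 11 / 10 * (2 * x) - (1 + a\<^sup>2 - x\<^sup>2) * ?D" by simp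
    moreover have "DERIV ?G x :> 11 / 10 * (2 * x) - (1 + a\<^sup>2 - x\<^sup>2) * ?D"
      by (intro DERIV_diff DERIV_cmult has_real_derivative_edge_term) (auto intro!: derivative_eq_intros)
    ultimately show "\<exists>y. DERIV ?G x :> y \<and> 0 \<le> y" by blast
  next
    show "continuous_on {0..m} ?G"
      using has_real_derivative_edge_term
      by (intro continuous_intros) (meson DERIV_isCont continuous_at_imp_continuous_on)
  qed
  then show ?thesis by simp
qed

lemma edge_term_deviation_bound:
  assumes a: "1 \<le> a" and P: "0 \<le> P" "P \<le> 1" "m\<^sup>2 \<le> 1 \<Longrightarrow> 1 / 10 \<le> P"
    and G: "- 1 \<le> m\<^sup>2 * P - edge_term a m" "m\<^sup>2 * P - edge_term a m \<le> a\<^sup>2 - 1"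
  shows "\<bar>m\<^sup>2 * P - edge_term a m + edge_term a 0\<bar> \<le> min (m\<^sup>2) (3 * a\<^sup>2)"
proof -
  have e0: "0 \<le> edge_term a 0" "edge_term a 0 \<le> 1" using edge_term_zero_bounds a by auto
  have abs_m: "edge_term a m = edge_term a \<bar>m\<bar>"
    using edge_term_minus[of a m] by (simp add: abs_if)
  have upper: "m\<^sup>2 * P - edge_term a m + edge_term a 0 \<le> m\<^sup>2"
  proof (cases "m\<^sup>2 \<le> a\<^sup>2")
    case True
    then have "edge_term a 0 \<le> edge_term a \<bar>m\<bar>" using a abs_m by (intro edge_term_zero_le) auto
    moreover have "m\<^sup>2 * P \<le> m\<^sup>2" using P by (intro mult_left_le) auto
    ultimately show ?thesis using abs_m by linarith
  qed (use G e0 in linarith)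
  have lower: "- m\<^sup>2 \<le> m\<^sup>2 * P - edge_term a m + edge_term a 0"
  proof (cases "m\<^sup>2 \<le> 1")
    case True
    then have "\<bar>m\<bar> \<le> 1" by (simp add: abs_square_le_1)
    then have "edge_term a \<bar>m\<bar> \<le> edge_term a 0 + 11 / 10 * m\<^sup>2"
      using edge_term_le_zero_plus[of a "\<bar>m\<bar>"] a abs_m by simp
    \<comment> \<open>\<open>P \<ge> 1/10\<close> absorbs the excess of the slope \<open>11/10\<close> over \<open>1\<close>.\<close>
    moreover have "1 / 10 * m\<^sup>2 \<le> P * m\<^sup>2" using P True by (intro mult_right_mono) auto
    ultimately show ?thesis using abs_m by (simp add: algebra_simps)
  qed (use G e0 in linarith)
  have "1 \<le> a\<^sup>2" using a by (simp add: one_le_power)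
  with upper lower G e0 show ?thesis unfolding abs_le_iff min_def by (simp split: if_split)
qed

definition trunc_sq_dev :: "real \<Rightarrow> real \<Rightarrow> real \<Rightarrow> real" where
  "trunc_sq_dev \<sigma> \<tau> x = (x\<^sup>2 - \<sigma>\<^sup>2) * (if x\<^sup>2 \<le> \<sigma>\<^sup>2 * \<tau> then 1 else 0)"

definition trunc_sq_dev_moment :: "real \<Rightarrow> real \<Rightarrow> real \<Rightarrow> real" where
  "trunc_sq_dev_moment \<sigma> \<tau> \<mu> = (\<integral>x. normal_density \<mu> \<sigma> x * trunc_sq_dev \<sigma> \<tau> x \<partial>lborel)"

lemma prod_trunc_eq:
  "prod_trunc \<sigma> \<tau> x y = (x\<^sup>2 - \<sigma>\<^sup>2) * (y\<^sup>2 - \<sigma>\<^sup>2) - trunc_sq_dev \<sigma> \<tau> x * trunc_sq_dev \<sigma> \<tau> y"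
  by (auto simp: prod_trunc_def trunc_sq_dev_def max_def)

lemma trunc_sq_dev_eq_indicator:
  assumes "0 < \<sigma>" "0 \<le> \<tau>"
  shows "trunc_sq_dev \<sigma> \<tau> x = indicator {- (\<sigma> * sqrt \<tau>)..\<sigma> * sqrt \<tau>} x * (x\<^sup>2 - \<sigma>\<^sup>2)"
proof -
  have "\<sigma>\<^sup>2 * \<tau> = (\<sigma> * sqrt \<tau>)\<^sup>2" "0 \<le> \<sigma> * sqrt \<tau>"
    using assms by (simp_all add: power_mult_distrib)
  then have "x\<^sup>2 \<le> \<sigma>\<^sup>2 * \<tau> \<longleftrightarrow> x \<in> {- (\<sigma> * sqrt \<tau>)..\<sigma> * sqrt \<tau>}"
    by (auto simp: abs_le_square_iff[symmetric] abs_le_iff)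
  then show ?thesis by (simp add: trunc_sq_dev_def indicator_def)
qed

lemma has_bochner_integral_normal_sq_dev:
  assumes "0 < \<sigma>"
  shows "has_bochner_integral lborel (\<lambda>x. normal_density \<mu> \<sigma> x * (x\<^sup>2 - \<sigma>\<^sup>2)) (\<mu>\<^sup>2)"
proof -
  let ?n = "normal_density \<mu> \<sigma>"
  have "has_bochner_integral lborel
      (\<lambda>x. ?n x * (x - \<mu>) ^ (2 * 1) + (2 * \<mu>) * (?n x * (x - \<mu>) ^ (2 * 0 + 1)) + (\<mu>\<^sup>2 - \<sigma>\<^sup>2) * ?n x)
      (\<sigma>\<^sup>2 + (2 * \<mu>) * 0 + (\<mu>\<^sup>2 - \<sigma>\<^sup>2) * 1)"
    using normal_moment_even[OF assms, of \<mu> 1] normal_moment_odd[OF assms, of \<mu> 0]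
      normal_moment_even[OF assms, of \<mu> 0]
    by (intro has_bochner_integral_add has_bochner_integral_mult_right) (simp_all add: power2_eq_square)
  then show ?thesis
    by (rule has_bochner_integral_cong[THEN iffD1, rotated 3]) (auto simp: power2_eq_square algebra_simps)
qed

lemma has_real_derivative_normal_density:
  assumes "0 < \<sigma>"
  shows "(normal_density \<mu> \<sigma> has_real_derivative normal_density \<mu> \<sigma> x * (- (x - \<mu>) / \<sigma>\<^sup>2)) (at x)"
proof -
  define c where "c = 1 / sqrt (2 * pi * \<sigma>\<^sup>2)"
  have "normal_density \<mu> \<sigma> = (\<lambda>x. c * exp (- (x - \<mu>)\<^sup>2 / (2 * \<sigma>\<^sup>2)))"
    by (simp add: normal_density_def c_def fun_eq_iff)
  moreover have "((\<lambda>x. c * exp (- (x - \<mu>)\<^sup>2 / (2 * \<sigma>\<^sup>2))) has_real_derivative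
      c * (exp (- (x - \<mu>)\<^sup>2 / (2 * \<sigma>\<^sup>2)) * (- (x - \<mu>) / \<sigma>\<^sup>2))) (at x)"
    using assms by (auto intro!: derivative_eq_intros simp: field_simps power2_eq_square)
  ultimately show ?thesis by (simp add: mult.assoc)
qed

lemma integral_Icc_normal_quadratic:
  assumes "0 < \<sigma>" "0 \<le> A"
  shows "(\<integral>x. indicator {- A..A} x * ((x\<^sup>2 - \<sigma>\<^sup>2 - \<mu>\<^sup>2) * normal_density \<mu> \<sigma> x) \<partial>lborel)
     = - \<sigma>\<^sup>2 * (A + \<mu>) * normal_density \<mu> \<sigma> A + \<sigma>\<^sup>2 * (- A + \<mu>) * normal_density \<mu> \<sigma> (- A)"
proof -
  let ?n = "normal_density \<mu> \<sigma>"
  let ?F = "\<lambda>x. - \<sigma>\<^sup>2 * (x + \<mu>) * ?n x"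
  have "(\<integral>x. indicator {- A..A} x *\<^sub>R ((x\<^sup>2 - \<sigma>\<^sup>2 - \<mu>\<^sup>2) * ?n x) \<partial>lborel) = ?F A - ?F (- A)"
  proof (rule integral_FTC_atLeastAtMost)
    fix x :: real
    have "(?F has_real_derivative - \<sigma>\<^sup>2 * (x + \<mu>) * (?n x * (- (x - \<mu>) / \<sigma>\<^sup>2)) + (- \<sigma>\<^sup>2 * 1) * ?n x) (at x)"
      by (intro DERIV_mult' has_real_derivative_normal_density assms) (auto intro!: derivative_eq_intros)
    moreover have "- \<sigma>\<^sup>2 * (x + \<mu>) * (?n x * (- (x - \<mu>) / \<sigma>\<^sup>2)) + (- \<sigma>\<^sup>2 * 1) * ?n x
        = (x\<^sup>2 - \<sigma>\<^sup>2 - \<mu>\<^sup>2) * ?n x"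
      using assms by (simp add: field_simps power2_eq_square)
    ultimately have "(?F has_real_derivative (x\<^sup>2 - \<sigma>\<^sup>2 - \<mu>\<^sup>2) * ?n x) (at x)" by simp
    then show "(?F has_vector_derivative (x\<^sup>2 - \<sigma>\<^sup>2 - \<mu>\<^sup>2) * ?n x) (at x within {- A..A})"
      by (simp add: has_real_derivative_iff_has_vector_derivative[symmetric] has_field_derivative_at_within)
  next
    show "continuous_on {- A..A} (\<lambda>x. (x\<^sup>2 - \<sigma>\<^sup>2 - \<mu>\<^sup>2) * ?n x)"
      unfolding normal_density_def using assms by (intro continuous_intros) auto
  qed (use assms in simp)
  then show ?thesis by simp
qed

lemma normal_density_scaled:
  assumes "0 < \<sigma>"
  shows "normal_density \<mu> \<sigma> (\<sigma> * a) = std_normal_density (a - \<mu> / \<sigma>) / \<sigma>"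
    and "normal_density \<mu> \<sigma> (- (\<sigma> * a)) = std_normal_density (a + \<mu> / \<sigma>) / \<sigma>"
proof -
  have sq: "sqrt (2 * pi * \<sigma>\<^sup>2) = sqrt (2 * pi) * \<sigma>" using assms by (simp add: real_sqrt_mult)
  have "- (\<sigma> * a - \<mu>)\<^sup>2 / (2 * \<sigma>\<^sup>2) = - (a - \<mu> / \<sigma>)\<^sup>2 / 2"
    and "- (- (\<sigma> * a) - \<mu>)\<^sup>2 / (2 * \<sigma>\<^sup>2) = - (a + \<mu> / \<sigma>)\<^sup>2 / 2"
    using assms by (simp_all add: field_simps power2_eq_square)
  then show "normal_density \<mu> \<sigma> (\<sigma> * a) = std_normal_density (a - \<mu> / \<sigma>) / \<sigma>"
    and "normal_density \<mu> \<sigma> (- (\<sigma> * a)) = std_normal_density (a + \<mu> / \<sigma>) / \<sigma>"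
    unfolding normal_density_def sq by simp_all
qed

lemma integrable_normal_trunc_sq_dev:
  assumes "0 < \<sigma>" "0 \<le> \<tau>"
  shows "integrable lborel (\<lambda>x. normal_density \<mu> \<sigma> x * trunc_sq_dev \<sigma> \<tau> x)"
  using integrable_mult_indicator[OF _ integrable.intros[OF has_bochner_integral_normal_sq_dev[OF assms(1)]],
      of "{- (\<sigma> * sqrt \<tau>)..\<sigma> * sqrt \<tau>}" \<mu>]
  by (simp add: trunc_sq_dev_eq_indicator[OF assms] mult.left_commute)

lemma trunc_sq_dev_moment_eq:
  assumes "0 < \<sigma>" "0 \<le> \<tau>"
  shows "trunc_sq_dev_moment \<sigma> \<tau> \<mu>
    = \<mu>\<^sup>2 * (\<integral>x. indicator {- (\<sigma> * sqrt \<tau>)..\<sigma> * sqrt \<tau>} x * normal_density \<mu> \<sigma> x \<partial>lborel)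
      - \<sigma>\<^sup>2 * edge_term (sqrt \<tau>) (\<mu> / \<sigma>)"
proof -
  let ?n = "normal_density \<mu> \<sigma>"
  define A where "A = \<sigma> * sqrt \<tau>"
  have "integrable lborel (\<lambda>x. ?n x * (x\<^sup>2 - \<sigma>\<^sup>2) - \<mu>\<^sup>2 * ?n x)"
    using integrable.intros[OF has_bochner_integral_normal_sq_dev[OF assms(1), of \<mu>]]
      integrable_normal_density[OF assms(1)] by auto
  then have "integrable lborel (\<lambda>x. (x\<^sup>2 - \<sigma>\<^sup>2 - \<mu>\<^sup>2) * ?n x)"
    by (simp add: algebra_simps)
  from integrable_mult_indicator[OF _ this, of "{- A..A}"]
  have int_quadratic: "integrable lborel (\<lambda>x. indicator {- A..A} x * ((x\<^sup>2 - \<sigma>\<^sup>2 - \<mu>\<^sup>2) * ?n x))"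
    by simp
  have int_density: "integrable lborel (\<lambda>x. indicator {- A..A} x * ?n x)"
    using integrable_mult_indicator[OF _ integrable_normal_density[OF assms(1)], of "{- A..A}"] by simp
  have "trunc_sq_dev_moment \<sigma> \<tau> \<mu>
      = (\<integral>x. indicator {- A..A} x * ((x\<^sup>2 - \<sigma>\<^sup>2 - \<mu>\<^sup>2) * ?n x) + \<mu>\<^sup>2 * (indicator {- A..A} x * ?n x) \<partial>lborel)"
    unfolding trunc_sq_dev_moment_def trunc_sq_dev_eq_indicator[OF assms] A_def
    by (intro Bochner_Integration.integral_cong) (auto simp: algebra_simps)
  also have "\<dots> = - \<sigma>\<^sup>2 * (A + \<mu>) * ?n A + \<sigma>\<^sup>2 * (- A + \<mu>) * ?n (- A)
      + \<mu>\<^sup>2 * (\<integral>x. indicator {- A..A} x * ?n x \<partial>lborel)"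
    using int_quadratic int_density integral_Icc_normal_quadratic[OF assms(1), of A \<mu>] assms
    by (simp add: A_def)
  also have "- \<sigma>\<^sup>2 * (A + \<mu>) * ?n A + \<sigma>\<^sup>2 * (- A + \<mu>) * ?n (- A) = - \<sigma>\<^sup>2 * edge_term (sqrt \<tau>) (\<mu> / \<sigma>)"
    unfolding A_def normal_density_scaled[OF assms(1)] edge_term_def using assms(1)
    by (simp add: field_simps power2_eq_square)
  finally show ?thesis by (simp add: A_def)
qed

lemma normal_Icc_integral_ge:
  assumes "0 < \<sigma>" "\<bar>\<mu>\<bar> \<le> \<sigma>" "\<sigma> \<le> A"
  shows "1 / 10 \<le> (\<integral>x. indicator {- A..A} x * normal_density \<mu> \<sigma> x \<partial>lborel)"
proof -
  define c where "c = exp (- 2) / (sqrt (2 * pi) * \<sigma>)"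
  \<comment> \<open>On \<open>[-\<sigma>, \<sigma>]\<close> the density is at least its value two standard deviations from the mean.\<close>
  have below: "indicator {- \<sigma>..\<sigma>} x * c \<le> indicator {- A..A} x * normal_density \<mu> \<sigma> x" for x
  proof (cases "x \<in> {- \<sigma>..\<sigma>}")
    case True
    then have "\<bar>x - \<mu>\<bar> \<le> \<bar>2 * \<sigma>\<bar>" using assms by auto
    then have "(x - \<mu>)\<^sup>2 \<le> (2 * \<sigma>)\<^sup>2" by (simp only: abs_le_square_iff)
    then have "exp (- 2) \<le> exp (- (x - \<mu>)\<^sup>2 / (2 * \<sigma>\<^sup>2))"
      using assms by (simp add: field_simps power2_eq_square)
    then have "c \<le> normal_density \<mu> \<sigma> x"
      unfolding c_def normal_density_def using assms by (simp add: real_sqrt_mult divide_right_mono)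
    then show ?thesis using True assms by (simp add: indicator_def)
  qed simp
  have "integrable lborel (indicat_real {- \<sigma>..\<sigma>})"
    by (rule integrable_real_indicator) (auto simp: emeasure_lborel_Icc_eq)
  then have "(\<integral>x. indicator {- \<sigma>..\<sigma>} x * c \<partial>lborel) \<le> (\<integral>x. indicator {- A..A} x * normal_density \<mu> \<sigma> x \<partial>lborel)"
    using below integrable_mult_indicator[OF _ integrable_normal_density[OF assms(1)], of "{- A..A}" \<mu>]
    by (intro integral_mono) auto
  moreover have "(\<integral>x. indicator {- \<sigma>..\<sigma>} x * c \<partial>lborel) = 2 * exp (- 2) / sqrt (2 * pi)"
    using assms by (simp add: c_def field_simps)
  moreover have "1 / 10 \<le> 2 * exp (- 2) / sqrt (2 * pi)"
  proof -
    have "sqrt (2 * pi) * exp 2 \<le> 13 / 5 * (37 / 5)"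
      using sqrt_2pi_bounds exp_two_le by (intro mult_mono) auto
    then show ?thesis using sqrt_2pi_bounds by (simp add: exp_minus field_simps)
  qed
  ultimately show ?thesis by linarith
qed

lemma trunc_sq_dev_moment_bounds:
  assumes "0 < \<sigma>" "1 \<le> \<tau>"
  shows "- \<sigma>\<^sup>2 \<le> trunc_sq_dev_moment \<sigma> \<tau> \<mu>" "trunc_sq_dev_moment \<sigma> \<tau> \<mu> \<le> \<sigma>\<^sup>2 * (\<tau> - 1)"
proof -
  let ?n = "normal_density \<mu> \<sigma>"
  have int: "integrable lborel (\<lambda>x. ?n x * trunc_sq_dev \<sigma> \<tau> x)"
    using assms by (intro integrable_normal_trunc_sq_dev) auto
  have int_n: "integrable lborel ?n" using assms(1) by (rule integrable_normal_density)
  have "(\<integral>x. ?n x * (- \<sigma>\<^sup>2) \<partial>lborel) \<le> trunc_sq_dev_moment \<sigma> \<tau> \<mu>"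
    unfolding trunc_sq_dev_moment_def using int_n
    by (intro integral_mono int mult_left_mono) (auto simp: trunc_sq_dev_def)
  then show "- \<sigma>\<^sup>2 \<le> trunc_sq_dev_moment \<sigma> \<tau> \<mu>" using assms by simp
  have "trunc_sq_dev_moment \<sigma> \<tau> \<mu> \<le> (\<integral>x. ?n x * (\<sigma>\<^sup>2 * (\<tau> - 1)) \<partial>lborel)"
    unfolding trunc_sq_dev_moment_def using assms int_n
    by (intro integral_mono int mult_left_mono) (auto simp: trunc_sq_dev_def algebra_simps)
  then show "trunc_sq_dev_moment \<sigma> \<tau> \<mu> \<le> \<sigma>\<^sup>2 * (\<tau> - 1)" using assms by simp
qed

lemma trunc_sq_dev_moment_zero:
  assumes "0 < \<sigma>" "0 \<le> \<tau>"
  shows "trunc_sq_dev_moment \<sigma> \<tau> 0 = - \<sigma>\<^sup>2 * edge_term (sqrt \<tau>) 0"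
  using trunc_sq_dev_moment_eq[OF assms, of 0] by simp

lemma trunc_sq_dev_moment_deviation:
  assumes "0 < \<sigma>" "1 \<le> \<tau>"
  shows "\<bar>trunc_sq_dev_moment \<sigma> \<tau> \<mu> - trunc_sq_dev_moment \<sigma> \<tau> 0\<bar> \<le> min (\<mu>\<^sup>2) (3 * \<sigma>\<^sup>2 * \<tau>)"
proof -
  define a where "a = sqrt \<tau>"
  define m where "m = \<mu> / \<sigma>"
  define P where "P = (\<integral>x. indicator {- (\<sigma> * a)..\<sigma> * a} x * normal_density \<mu> \<sigma> x \<partial>lborel)"
  define G where "G = m\<^sup>2 * P - edge_term a m"
  have s2: "0 < \<sigma>\<^sup>2" using assms by simp
  have a: "1 \<le> a" "a\<^sup>2 = \<tau>" using assms by (auto simp: a_def)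
  have \<mu>: "\<mu>\<^sup>2 = \<sigma>\<^sup>2 * m\<^sup>2" using assms by (simp add: m_def field_simps)
  have moment: "trunc_sq_dev_moment \<sigma> \<tau> \<mu> = \<sigma>\<^sup>2 * G"
    using trunc_sq_dev_moment_eq[of \<sigma> \<tau> \<mu>] assms by (simp add: G_def P_def a_def m_def \<mu> algebra_simps)
  have moment0: "trunc_sq_dev_moment \<sigma> \<tau> 0 = - \<sigma>\<^sup>2 * edge_term a 0"
    using trunc_sq_dev_moment_zero assms by (simp add: a_def)
  have "\<bar>G + edge_term a 0\<bar> \<le> min (m\<^sup>2) (3 * a\<^sup>2)"
    unfolding G_def
  proof (rule edge_term_deviation_bound[OF a(1)])
    show "0 \<le> P" unfolding P_def by (intro Bochner_Integration.integral_nonneg) simp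
    have "P \<le> (\<integral>x. normal_density \<mu> \<sigma> x \<partial>lborel)" unfolding P_def
      using integrable_mult_indicator[OF _ integrable_normal_density[OF assms(1)], of "{- (\<sigma> * a)..\<sigma> * a}" \<mu>]
        integrable_normal_density[OF assms(1)]
      by (intro integral_mono) (auto simp: indicator_def)
    then show "P \<le> 1" using assms by simp
    show "1 / 10 \<le> P" if "m\<^sup>2 \<le> 1"
    proof -
      have "\<mu>\<^sup>2 \<le> \<sigma>\<^sup>2" using that s2 \<mu> by (simp add: mult_le_cancel_left1)
      then have "\<bar>\<mu>\<bar> \<le> \<sigma>" using assms by (simp add: abs_le_square_iff[symmetric])
      then show ?thesis unfolding P_def using assms a by (intro normal_Icc_integral_ge) auto
    qed
    have "\<sigma>\<^sup>2 * (- 1) \<le> \<sigma>\<^sup>2 * G" "\<sigma>\<^sup>2 * G \<le> \<sigma>\<^sup>2 * (a\<^sup>2 - 1)"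
      using trunc_sq_dev_moment_bounds[OF assms, of \<mu>] a(2) unfolding moment by simp_all
    then show "- 1 \<le> m\<^sup>2 * P - edge_term a m" "m\<^sup>2 * P - edge_term a m \<le> a\<^sup>2 - 1"
      unfolding G_def mult_le_cancel_left_pos[OF s2] .
  qed
  then have "\<sigma>\<^sup>2 * \<bar>G + edge_term a 0\<bar> \<le> \<sigma>\<^sup>2 * min (m\<^sup>2) (3 * a\<^sup>2)"
    using s2 by (intro mult_left_mono) auto
  moreover have "\<sigma>\<^sup>2 * \<bar>G + edge_term a 0\<bar> = \<bar>trunc_sq_dev_moment \<sigma> \<tau> \<mu> - trunc_sq_dev_moment \<sigma> \<tau> 0\<bar>"
    by (simp add: moment moment0 abs_mult flip: distrib_left)
  moreover have "\<sigma>\<^sup>2 * min (m\<^sup>2) (3 * a\<^sup>2) = min (\<mu>\<^sup>2) (3 * \<sigma>\<^sup>2 * \<tau>)"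
    using s2 by (simp add: \<mu> a(2) min_mult_distrib_left)
  ultimately show ?thesis by simp
qed

lemma (in pair_sigma_finite) integral_product_mult:
  fixes f g :: "_ \<Rightarrow> real"
  assumes f: "integrable M1 f" and g: "integrable M2 g"
  shows "integrable (M1 \<Otimes>\<^sub>M M2) (\<lambda>z. f (fst z) * g (snd z))"
    and "(\<integral>z. f (fst z) * g (snd z) \<partial>(M1 \<Otimes>\<^sub>M M2)) = (\<integral>x. f x \<partial>M1) * (\<integral>y. g y \<partial>M2)"
proof -
  have [measurable]: "f \<in> borel_measurable M1" "g \<in> borel_measurable M2"
    using f g by (auto dest: borel_measurable_integrable)
  show int: "integrable (M1 \<Otimes>\<^sub>M M2) (\<lambda>z. f (fst z) * g (snd z))"
  proof (rule Fubini_integrable)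
    have "integrable M1 (\<lambda>x. \<bar>f x\<bar> * (\<integral>y. \<bar>g y\<bar> \<partial>M2))"
      using f by (intro integrable_mult_left integrable_abs)
    then show "integrable M1 (\<lambda>x. \<integral>y. norm (f (fst (x, y)) * g (snd (x, y))) \<partial>M2)"
      by (simp add: abs_mult)
  qed (use g in simp_all)
  have "(\<integral>x. (\<integral>y. f x * g y \<partial>M2) \<partial>M1) = integral\<^sup>L (M1 \<Otimes>\<^sub>M M2) (\<lambda>(x, y). f x * g y)"
    using int by (intro integral_fst) (simp add: split_beta')
  then show "(\<integral>z. f (fst z) * g (snd z) \<partial>(M1 \<Otimes>\<^sub>M M2)) = (\<integral>x. f x \<partial>M1) * (\<integral>y. g y \<partial>M2)"
    by (simp add: split_beta')
qed

lemma eta_eq_neg_square: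
  assumes "0 < \<sigma>" "0 \<le> \<tau>"
  shows "eta \<sigma> \<tau> = - (trunc_sq_dev_moment \<sigma> \<tau> 0)\<^sup>2"
proof -
  let ?n = "normal_density 0 \<sigma>"
  let ?q = "\<lambda>x. ?n x * (x\<^sup>2 - \<sigma>\<^sup>2)" and ?H = "\<lambda>x. ?n x * trunc_sq_dev \<sigma> \<tau> x"
  have q: "integrable lborel ?q" "(\<integral>x. ?q x \<partial>lborel) = 0"
    using has_bochner_integral_normal_sq_dev[OF assms(1), of 0]
    by (auto dest: integrable.intros has_bochner_integral_integral_eq)
  have H: "integrable lborel ?H" using assms by (rule integrable_normal_trunc_sq_dev)
  have "eta \<sigma> \<tau> = (\<integral>z. ?q (fst z) * ?q (snd z) - ?H (fst z) * ?H (snd z) \<partial>(lborel \<Otimes>\<^sub>M lborel))"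
    unfolding eta_def prod_trunc_eq by (intro Bochner_Integration.integral_cong) (auto simp: algebra_simps)
  also have "\<dots> = (\<integral>x. ?q x \<partial>lborel) * (\<integral>x. ?q x \<partial>lborel) - (\<integral>x. ?H x \<partial>lborel) * (\<integral>x. ?H x \<partial>lborel)"
    using lborel_pair.integral_product_mult[OF q(1) q(1)] lborel_pair.integral_product_mult[OF H H] by simp
  finally show ?thesis unfolding q(2) trunc_sq_dev_moment_def by (simp add: power2_eq_square)
qed

lemma (in prob_space) integral_prod_trunc_indep_normal:
  assumes X: "distributed M lborel X (\<lambda>x. ennreal (normal_density \<mu> \<sigma> x))"
    and Y: "distributed M lborel Y (\<lambda>y. ennreal (normal_density \<theta> \<sigma> y))"
    and XY: "indep_var borel X borel Y" and "0 < \<sigma>" "0 \<le> \<tau>"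
  shows "(\<integral>\<omega>. prod_trunc \<sigma> \<tau> (X \<omega>) (Y \<omega>) \<partial>M)
    = \<mu>\<^sup>2 * \<theta>\<^sup>2 - trunc_sq_dev_moment \<sigma> \<tau> \<mu> * trunc_sq_dev_moment \<sigma> \<tau> \<theta>"
proof -
  define q where "q x = x\<^sup>2 - \<sigma>\<^sup>2" for x :: real
  let ?H = "trunc_sq_dev \<sigma> \<tau>"
  have q_meas: "q \<in> borel_measurable borel" unfolding q_def by measurable
  have H_meas: "?H \<in> borel_measurable borel" unfolding trunc_sq_dev_def by measurable
  note q_lmeas = q_meas[folded measurable_lborel2] and H_lmeas = H_meas[folded measurable_lborel2]
  have q_moment: "has_bochner_integral lborel (\<lambda>x. normal_density m \<sigma> x * q x) (m\<^sup>2)" for m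
    using has_bochner_integral_normal_sq_dev[OF assms(4)] by (simp add: q_def)
  have H_int: "integrable lborel (\<lambda>x. normal_density m \<sigma> x * ?H x)" for m
    using assms(4,5) by (rule integrable_normal_trunc_sq_dev)
  have iqX: "integrable M (\<lambda>\<omega>. q (X \<omega>))" and iqY: "integrable M (\<lambda>\<omega>. q (Y \<omega>))"
    using distributed_integrable[OF X q_lmeas] distributed_integrable[OF Y q_lmeas]
      integrable.intros[OF q_moment] by simp_all
  have EqX: "(\<integral>\<omega>. q (X \<omega>) \<partial>M) = \<mu>\<^sup>2" and EqY: "(\<integral>\<omega>. q (Y \<omega>) \<partial>M) = \<theta>\<^sup>2"
    using distributed_integral[OF X q_lmeas] distributed_integral[OF Y q_lmeas]
      has_bochner_integral_integral_eq[OF q_moment] by simp_all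
  have iHX: "integrable M (\<lambda>\<omega>. ?H (X \<omega>))" and iHY: "integrable M (\<lambda>\<omega>. ?H (Y \<omega>))"
    using distributed_integrable[OF X H_lmeas] distributed_integrable[OF Y H_lmeas] H_int
    by simp_all
  have EHX: "(\<integral>\<omega>. ?H (X \<omega>) \<partial>M) = trunc_sq_dev_moment \<sigma> \<tau> \<mu>"
    and EHY: "(\<integral>\<omega>. ?H (Y \<omega>) \<partial>M) = trunc_sq_dev_moment \<sigma> \<tau> \<theta>"
    using distributed_integral[OF X H_lmeas] distributed_integral[OF Y H_lmeas]
    by (simp_all add: trunc_sq_dev_moment_def)
  have q_indep: "indep_var borel (q \<circ> X) borel (q \<circ> Y)"
    and H_indep: "indep_var borel (?H \<circ> X) borel (?H \<circ> Y)"
    using indep_var_compose[OF XY q_meas q_meas] indep_var_compose[OF XY H_meas H_meas] .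
  have "integrable M (\<lambda>\<omega>. q (X \<omega>) * q (Y \<omega>))"
    "(\<integral>\<omega>. q (X \<omega>) * q (Y \<omega>) \<partial>M) = \<mu>\<^sup>2 * \<theta>\<^sup>2"
    using indep_var_integrable[OF q_indep] indep_var_lebesgue_integral[OF q_indep] iqX iqY EqX EqY
    by (simp_all add: o_def)
  moreover have "integrable M (\<lambda>\<omega>. ?H (X \<omega>) * ?H (Y \<omega>))"
    "(\<integral>\<omega>. ?H (X \<omega>) * ?H (Y \<omega>) \<partial>M) = trunc_sq_dev_moment \<sigma> \<tau> \<mu> * trunc_sq_dev_moment \<sigma> \<tau> \<theta>"
    using indep_var_integrable[OF H_indep] indep_var_lebesgue_integral[OF H_indep] iHX iHY EHX EHY
    by (simp_all add: o_def)
  ultimately show ?thesis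
    unfolding prod_trunc_eq by (simp add: q_def)
qed

lemma abs_cross_term_le:
  fixes c d e A B :: real
  assumes "0 \<le> c" "\<bar>d\<bar> \<le> A" "\<bar>e\<bar> \<le> B"
  shows "\<bar>c * d + c * e - d * e\<bar> \<le> A * B + c * A + c * B"
proof -
  have "\<bar>c * d\<bar> \<le> c * A" "\<bar>c * e\<bar> \<le> c * B" "\<bar>d * e\<bar> \<le> A * B"
    using assms by (auto simp: abs_mult intro: mult_left_mono mult_mono)
  then show ?thesis by linarith
qed

theorem lemma3:
  fixes M :: "'a measure" and X Y :: "'a \<Rightarrow> real" and \<mu> \<theta> \<sigma> \<tau> :: real
  assumes "prob_space M"
    and "distributed M lborel X (\<lambda>x. ennreal (normal_density \<mu> \<sigma> x))"
    and "distributed M lborel Y (\<lambda>y. ennreal (normal_density \<theta> \<sigma> y))"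
    and "prob_space.indep_var M borel X borel Y"
    and "\<sigma> > 0" and "\<tau> \<ge> 1"
  shows "eta \<sigma> \<tau> = - 4 * \<sigma> ^ 4 * \<tau> * (std_normal_density (sqrt \<tau>))\<^sup>2 \<and>
         \<bar>(\<integral>\<omega>. prod_trunc \<sigma> \<tau> (X \<omega>) (Y \<omega>) \<partial>M) - eta \<sigma> \<tau> - \<mu>\<^sup>2 * \<theta>\<^sup>2\<bar>
         \<le> min (\<mu>\<^sup>2) (3 * \<sigma>\<^sup>2 * \<tau>) * min (\<theta>\<^sup>2) (3 * \<sigma>\<^sup>2 * \<tau>)
           + 2 * \<sigma>\<^sup>2 * sqrt \<tau> * std_normal_density (sqrt \<tau>) * min (\<mu>\<^sup>2) (3 * \<sigma>\<^sup>2 * \<tau>)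
           + 2 * \<sigma>\<^sup>2 * sqrt \<tau> * std_normal_density (sqrt \<tau>) * min (\<theta>\<^sup>2) (3 * \<sigma>\<^sup>2 * \<tau>)"
proof -
  interpret prob_space M by fact
  have \<sigma>: "0 < \<sigma>" and \<tau>: "1 \<le> \<tau>" "0 \<le> \<tau>" using assms by auto
  define c where "c = 2 * \<sigma>\<^sup>2 * sqrt \<tau> * std_normal_density (sqrt \<tau>)"
  let ?m = "trunc_sq_dev_moment \<sigma> \<tau>"
  have m0: "?m 0 = - c"
    using trunc_sq_dev_moment_zero[OF \<sigma> \<tau>(2)] by (simp add: c_def edge_term_zero)
  have "eta \<sigma> \<tau> = - c\<^sup>2" using eta_eq_neg_square[OF \<sigma> \<tau>(2)] m0 by simp
  also have "\<dots> = - 4 * \<sigma> ^ 4 * \<tau> * (std_normal_density (sqrt \<tau>))\<^sup>2"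
    using \<tau> by (simp add: c_def power_mult_distrib)
  finally have eta: "eta \<sigma> \<tau> = \<dots>" .
  have "(\<integral>\<omega>. prod_trunc \<sigma> \<tau> (X \<omega>) (Y \<omega>) \<partial>M) - eta \<sigma> \<tau> - \<mu>\<^sup>2 * \<theta>\<^sup>2
      = c * (?m \<mu> + c) + c * (?m \<theta> + c) - (?m \<mu> + c) * (?m \<theta> + c)"
    using integral_prod_trunc_indep_normal[OF assms(2-4) \<sigma> \<tau>(2)] eta_eq_neg_square[OF \<sigma> \<tau>(2)] m0
    by (simp add: algebra_simps power2_eq_square)
  moreover have "0 \<le> c" using \<tau>(2) by (simp add: c_def)
  moreover have "\<bar>?m m + c\<bar> \<le> min (m\<^sup>2) (3 * \<sigma>\<^sup>2 * \<tau>)" for m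
    using trunc_sq_dev_moment_deviation[OF \<sigma> \<tau>(1), of m] m0 by simp
  ultimately show ?thesis
    using eta abs_cross_term_le by (simp add: c_def)
qed

end
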